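(* Let $a,A$ be real numbers with $a+3>0$ and $\frac{a+3}{2}=\frac{2}{A+3}$, and let $\xi,\eta,\mu,\mathcal{E},L$ be real numbers. Consider $$U(r)=\xi r^{a+1}+\mu r^{2\left(\sqrt{\frac{a+3}{2}}-1\right)},\qquad V(\rho)=\eta\rho^{A+1}+\mu\rho^{2\left(\sqrt{\frac{A+3}{2}}-1\right)}.$$ Then: (i) $U$ and $V$ are classically Newtonianly dual: if $\xi=-\mathcal{E}$ and $\theta$ satisfies the orbit equation for $U$ with energy $E=-\eta$ and angular momentum $L$ on an open interval $I\subset(0,\infty)$, then $\phi(\rho)=\frac{2}{A+3}\theta\left(\rho^{(A+3)/2}\right)$ satisfies the orbit equation for $V$ with energy $\mathcal{E}$ and angular momentum $L$ on $J=\{\rho>0:\rho^{(A+3)/2}\in I\}$; (ii) the terms $\xi r^{a+1}$ and $\eta\rho^{A+1}$ are Newtonianly dual power potentials, and so are $\mu r^{2(\sqrt{(a+3)/2}-1)}$ and $\mu\rho^{2(\sqrt{(A+3)/2}-1)}$; i.e., writing the second-term exponents as $b+1$ and $B+1$ with $b=2\sqrt{\frac{a+3}{2}}-3$, $B=2\sqrt{\frac{A+3}{2}}-3$, one has $\frac{b+3}{2}=\frac{2}{B+3}$ (as well as $\frac{a+3}{2}=\frac{2}{A+3}$).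
   Context: For a central potential $W$ on $(0,\infty)$, energy $E$ and angular momentum $L$, a differentiable function $\theta$ on an open interval $I\subset(0,\infty)$ satisfies the (classical) orbit equation if for all $r\in I$ the quantity $E-\frac{L^2}{2r^2}-W(r)$ is positive and $\frac{d\theta}{dr}=\frac{L/r^{2}}{\sqrt{2\left[E-\frac{L^{2}}{2r^{2}}-W(r)\right]}}$. Two power potentials $\xi r^{\alpha+1}$ and $\eta\rho^{\beta+1}$ are called Newtonianly dual when $\frac{\alpha+3}{2}=\frac{2}{\beta+3}$. *)

theory Defs
  imports "HOL-Analysis.Analysis"
begin

definition orbit_eq :: "(real \<Rightarrow> real) \<Rightarrow> real \<Rightarrow> real \<Rightarrow> (real \<Rightarrow> real) \<Rightarrow> real set \<Rightarrow> bool" where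
  "orbit_eq W E L \<theta> I \<longleftrightarrow>
     (\<forall>r\<in>I. E - L^2 / (2 * r^2) - W r > 0 \<and>
        (\<theta> has_real_derivative (L / r^2) / sqrt (2 * (E - L^2 / (2 * r^2) - W r))) (at r))"

text \<open>Newtonian duality of the power potentials xi r^(alpha+1) and eta rho^(beta+1).\<close>
definition newton_dual :: "real \<Rightarrow> real \<Rightarrow> bool" where
  "newton_dual \<alpha> \<beta> \<longleftrightarrow> (\<alpha> + 3) / 2 = 2 / (\<beta> + 3)"

end

theory Submission
  imports Defs
begin

text \<open>Substituting \<open>r = \<rho>\<^sup>k\<close> into the orbit equation multiplies \<open>dr/d\<rho>\<close> by \<open>k \<rho>\<^bsup>k-1\<^esup>\<close>,
  and this factor is absorbed under the square root as soon as the energy balance of the new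
  potential is the old one rescaled by \<open>\<rho>\<^bsup>2k-2\<^esup>\<close>; the centrifugal term \<open>L\<^sup>2/(2r\<^sup>2)\<close>
  rescales correctly by itself. For power potentials the rescaling sends \<open>r\<^bsup>c+1\<^esup>\<close> to
  \<open>\<rho>\<^bsup>k(c+3)-2\<^esup>\<close>, so the energy constant and the coupling of the dual power exchange roles,
  and the term with exponent \<open>2\<surd>((a+3)/2) - 2\<close> is mapped to its own dual.\<close>

lemma orbit_eq_powr_reparam:
  fixes W V :: "real \<Rightarrow> real" and k E F L :: real
  assumes "k > 0"
    and energy: "\<And>\<rho>. \<rho> > 0 \<Longrightarrow> V \<rho> - F = \<rho> powr (2 * k - 2) * (W (\<rho> powr k) - E)"
    and orbit: "orbit_eq W E L \<theta> I"
  shows "orbit_eq V F L (\<lambda>\<rho>. \<theta> (\<rho> powr k) / k) {\<rho>. \<rho> > 0 \<and> \<rho> powr k \<in> I}"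
  unfolding orbit_eq_def
proof
  fix \<rho> assume "\<rho> \<in> {\<rho>. \<rho> > 0 \<and> \<rho> powr k \<in> I}"
  then have \<rho>: "\<rho> > 0" and rI: "\<rho> powr k \<in> I" by auto
  define r where "r = \<rho> powr k"
  define t where "t = \<rho> powr (k - 1)"
  define Q where "Q = E - L^2 / (2 * r^2) - W r"
  from orbit rI have "Q > 0" and d\<theta>: "(\<theta> has_real_derivative (L / r^2) / sqrt (2 * Q)) (at r)"
    unfolding orbit_eq_def Q_def r_def by auto
  have "t > 0" using \<rho> by (simp add: t_def)
  have t2: "t^2 = \<rho> powr (2 * k - 2)"
    using \<rho> by (simp add: t_def powr_power algebra_simps)
  have r2: "r^2 = \<rho>^2 * t^2"
  proof -
    have "r^2 = \<rho> powr (2 * k)" using \<rho> by (simp add: r_def powr_power)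
    also have "\<dots> = \<rho> powr 2 * \<rho> powr (2 * k - 2)" by (simp add: powr_add[symmetric])
    finally show ?thesis using \<rho> by (simp add: t2)
  qed
  have scaling: "F - L^2 / (2 * \<rho>^2) - V \<rho> = t^2 * Q"
  proof -
    have "V \<rho> = F + t^2 * (W r - E)" using energy[OF \<rho>] by (simp add: t2 r_def)
    moreover have "L^2 / (2 * \<rho>^2) = t^2 * (L^2 / (2 * r^2))"
      using \<open>t > 0\<close> by (simp add: r2)
    ultimately show ?thesis by (simp add: Q_def algebra_simps)
  qed
  have "((\<lambda>x. \<theta> (x powr k)) has_real_derivative (L / r^2) / sqrt (2 * Q) * (k * t)) (at \<rho>)"
    using DERIV_chain2[OF d\<theta>[unfolded r_def] has_real_derivative_powr[OF \<rho>]]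
    by (simp add: r_def t_def)
  then have "((\<lambda>x. \<theta> (x powr k) / k) has_real_derivative (L / r^2) / sqrt (2 * Q) * t) (at \<rho>)"
    using DERIV_cdivide[where c = k] \<open>k > 0\<close> by fastforce
  moreover have "(L / r^2) / sqrt (2 * Q) * t = (L / \<rho>^2) / sqrt (2 * (t^2 * Q))"
  proof -
    have "sqrt (2 * (t^2 * Q)) = t * sqrt (2 * Q)"
      using \<open>t > 0\<close> by (simp add: real_sqrt_mult algebra_simps)
    then show ?thesis
      unfolding r2 using \<open>t > 0\<close> \<open>Q > 0\<close> \<rho> by (simp add: field_simps power2_eq_square)
  qed
  ultimately show "F - L^2 / (2 * \<rho>^2) - V \<rho> > 0 \<and>
      ((\<lambda>\<rho>. \<theta> (\<rho> powr k) / k) has_real_derivative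
        (L / \<rho>^2) / sqrt (2 * (F - L^2 / (2 * \<rho>^2) - V \<rho>))) (at \<rho>)"
    using \<open>Q > 0\<close> \<open>t > 0\<close> by (simp add: scaling)
qed

lemma powr_dual_term:
  fixes \<rho> k c C :: real
  assumes "\<rho> > 0" and "k * (c + 3) = C + 3"
  shows "\<rho> powr (2 * k - 2) * (\<rho> powr k) powr (c + 1) = \<rho> powr (C + 1)"
proof -
  have exponent: "2 * k - 2 + k * (c + 1) = C + 1" using assms(2) by (simp add: algebra_simps)
  have "\<rho> powr (2 * k - 2) * (\<rho> powr k) powr (c + 1) = \<rho> powr (2 * k - 2 + k * (c + 1))"
    by (simp only: powr_powr powr_add[of \<rho> "2 * k - 2"])
  then show ?thesis by (simp only: exponent)
qed

lemma newton_dual_pos: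
  assumes "newton_dual a A" and "a + 3 > 0"
  shows "A + 3 > 0"
proof -
  have "2 / (A + 3) > 0" using assms by (simp add: newton_dual_def)
  then show ?thesis by (simp add: zero_less_divide_iff)
qed

lemma newton_dual_sqrt:
  assumes "newton_dual a A" and "a + 3 > 0"
  shows "newton_dual (2 * sqrt ((a + 3) / 2) - 3) (2 * sqrt ((A + 3) / 2) - 3)"
proof -
  have "(a + 3) / 2 = inverse ((A + 3) / 2)"
    using assms(1) unfolding newton_dual_def by (simp only: inverse_divide)
  then have "sqrt ((a + 3) / 2) = inverse (sqrt ((A + 3) / 2))" by (simp only: real_sqrt_inverse)
  then show ?thesis by (simp add: newton_dual_def inverse_eq_divide)
qed

theorem mainTheorem2:
  fixes a A \<xi> \<eta> \<mu> \<E> L :: real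
  assumes "a + 3 > 0"
    and "(a + 3) / 2 = 2 / (A + 3)"
  defines "U \<equiv> (\<lambda>r. \<xi> * r powr (a + 1) + \<mu> * r powr (2 * (sqrt ((a + 3) / 2) - 1)))"
    and "V \<equiv> (\<lambda>\<rho>. \<eta> * \<rho> powr (A + 1) + \<mu> * \<rho> powr (2 * (sqrt ((A + 3) / 2) - 1)))"
    and "b \<equiv> 2 * sqrt ((a + 3) / 2) - 3"
    and "B \<equiv> 2 * sqrt ((A + 3) / 2) - 3"
  shows "(\<forall>\<theta> I. \<xi> = - \<E> \<and> open I \<and> is_interval I \<and> I \<subseteq> {0<..} \<and> orbit_eq U (- \<eta>) L \<theta> I \<longrightarrow>
            orbit_eq V \<E> L (\<lambda>\<rho>. 2 / (A + 3) * \<theta> (\<rho> powr ((A + 3) / 2)))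
              {\<rho>. \<rho> > 0 \<and> \<rho> powr ((A + 3) / 2) \<in> I})
         \<and> newton_dual a A \<and> newton_dual b B"
proof -
  have dual: "newton_dual a A" using assms(2) unfolding newton_dual_def .
  define k where "k = (A + 3) / 2"
  have "k > 0" using newton_dual_pos[OF dual assms(1)] by (simp add: k_def)
  have a_term: "k * (a + 3) = -1 + 3"
    using assms(2) \<open>k > 0\<close> by (simp add: k_def divide_simps mult.commute)
  have b_term: "k * (b + 3) = B + 3"
  proof -
    have "(a + 3) / 2 = 1 / k" using a_term \<open>k > 0\<close> by (simp add: field_simps)
    then have "k * sqrt ((a + 3) / 2) = sqrt k"
      using \<open>k > 0\<close> by (simp add: real_sqrt_divide real_div_sqrt)
    then show ?thesis by (simp add: b_def B_def k_def[symmetric] algebra_simps)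
  qed
  have energy: "V \<rho> - \<E> = \<rho> powr (2 * k - 2) * (U (\<rho> powr k) - - \<eta>)"
    if "\<xi> = - \<E>" and "\<rho> > 0" for \<rho>
    using that powr_dual_term[OF \<open>\<rho> > 0\<close> a_term] powr_dual_term[OF \<open>\<rho> > 0\<close> b_term]
      powr_dual_term[of \<rho> k "-1" A]
    by (simp add: U_def V_def b_def B_def k_def algebra_simps)
  have "orbit_eq V \<E> L (\<lambda>\<rho>. 2 / (A + 3) * \<theta> (\<rho> powr ((A + 3) / 2)))
          {\<rho>. \<rho> > 0 \<and> \<rho> powr ((A + 3) / 2) \<in> I}"
    if "\<xi> = - \<E>" and "orbit_eq U (- \<eta>) L \<theta> I" for \<theta> I
  proof -
    have "(\<lambda>\<rho>. \<theta> (\<rho> powr k) / k) = (\<lambda>\<rho>. 2 / (A + 3) * \<theta> (\<rho> powr ((A + 3) / 2)))"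
      by (simp add: k_def fun_eq_iff)
    then show ?thesis
      using orbit_eq_powr_reparam[OF \<open>k > 0\<close> energy[OF \<open>\<xi> = - \<E>\<close>] that(2)]
      by (simp add: k_def)
  qed
  then show ?thesis
    using dual newton_dual_sqrt[OF dual assms(1)] by (auto simp: b_def B_def)
qed

end
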